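(* Consider $n$-qubit circuits (one target and several traps) whose noisy output states, before an ideal measurement of every qubit in the Pauli-$Z$ basis, have the form $$\widetilde\rho^{(k)}_{\mathrm{out}}=\sum_{\mathcal{P}_0,\ldots,\mathcal{P}_m}q_0(\mathcal{P}_0)\cdots q_m(\mathcal{P}_m)\,\mathcal{P}_m\,c\mathcal{Z}_m\mathcal{U}^{(k)}_m\cdots\mathcal{P}_1\,c\mathcal{Z}_1\mathcal{U}^{(k)}_1\,\mathcal{P}_0\big(|0\rangle\langle0|^{\otimes n}\big),$$ where the distributions $q_j$ on $n$-qubit Pauli channels and the cycles $c\mathcal{Z}_j$ are the same for all circuits $k$, and only the one-qubit cycles $\mathcal{U}^{(k)}_j$ differ. Let $p_{\mathrm{err}}=\sum_{(\mathcal{P}_0,\dots,\mathcal{P}_m)\neq(\mathcal{I},\dots,\mathcal{I})}\prod_j q_j(\mathcal{P}_j)$. For a trap circuit (one whose ideal output is the all-zero string with certainty, with random Clifford one-qubit cycles), let $p_{\mathrm{inc}}$ be the probability that its measured output differs from $(0,\dots,0)$, averaged over the random one-qubit gates and the errors, and let $p_{\mathrm{canc}}<1$ be the conditional probability, given a non-identity pattern, that the pattern's merged net Pauli error is the identity. Assume that whenever the merged net error of a trap is a non-identity Pauli, the trap returns an incorrect output with probability at least $1/2$ (averaged over its random one-qubit gates). Then $$p_{\mathrm{inc}}\ge\frac{p_{\mathrm{err}}(1-p_{\mathrm{canc}})}{2},$$ and, letting $p_{\mathrm{ideal}}$ and $p_{\mathrm{exp}}$ be the $Z$-basis output distributions of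 the target circuit in the noiseless case (all $\mathcal{P}_j=\mathcal{I}$) and the noisy case respectively, $$\mathrm{VD}:=\frac12\sum_{\bar s}\big|p_{\mathrm{ideal}}(\bar s)-p_{\mathrm{exp}}(\bar s)\big|\le p_{\mathrm{err}}\le\frac{2p_{\mathrm{inc}}}{1-p_{\mathrm{canc}}}.$$ Moreover $2p_{\mathrm{inc}}\le 2p_{\mathrm{err}}$.
   Context: Here $c\mathcal{Z}_j$ is a cycle of controlled-$Z$ gates ($cZ=|0\rangle\langle0|\otimes I+|1\rangle\langle1|\otimes Z$) and $\mathcal{U}^{(k)}_j$ a cycle of one-qubit gates; channels compose right-to-left, and $\bar s\in\{0,1\}^n$ ranges over output bit strings. For trap circuits all one-qubit gates are Clifford, so a Pauli error pattern $(\mathcal{P}_0,\dots,\mathcal{P}_m)$ can be commuted through the circuit and merged into a single Pauli error at one cycle (its "merged net error"). The error distribution is assumed identical for target and traps (gate-independent noise on one-qubit cycles, randomized to Pauli noise by a quantum one-time pad). *)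

theory Defs
  imports "Jordan_Normal_Form.Matrix" "HOL-Probability.Probability_Mass_Function"
begin

text \<open>Computational basis of n qubits: indices b < 2^n; bit i of b is the value of qubit i.\<close>

definition bitval :: "nat \<Rightarrow> nat \<Rightarrow> nat" where
  "bitval b i = (if bit b i then 1 else 0)"

definition dagger :: "complex mat \<Rightarrow> complex mat" where
  "dagger A = Matrix.mat (dim_col A) (dim_row A) (\<lambda>(i,j). cnj (A $$ (j,i)))"

text \<open>n-qubit Pauli operators, labelled by (x,z) with x,z < 2^n: the operator
  X^x Z^z (tensor product over qubits). Global phases are irrelevant for the
  Pauli channel rho -> P rho P^dagger, so this covers all of I,X,Y,Z per qubit.\<close>
definition paulis :: "nat \<Rightarrow> (nat \<times> nat) set" where
  "paulis n = {0..<2^n} \<times> {0..<2^n}"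

definition pauli :: "nat \<Rightarrow> nat \<times> nat \<Rightarrow> complex mat" where
  "pauli n e = Matrix.mat (2^n) (2^n) (\<lambda>(a,b).
      if a = xor b (fst e) then (-1) ^ card {i. i < n \<and> bit b i \<and> bit (snd e) i} else 0)"

text \<open>A cycle of controlled-Z gates, given by its set of (unordered) qubit pairs;
  the gates act on pairwise disjoint qubits.\<close>
definition cz_cycle :: "nat \<Rightarrow> (nat \<times> nat) set \<Rightarrow> bool" where
  "cz_cycle n E \<longleftrightarrow> (\<forall>(i,j)\<in>E. i < n \<and> j < n \<and> i \<noteq> j) \<and>
     (\<forall>(i,j)\<in>E. \<forall>(k,l)\<in>E. (i,j) \<noteq> (k,l) \<longrightarrow> {i,j} \<inter> {k,l} = {})"

definition cz_mat :: "nat \<Rightarrow> (nat \<times> nat) set \<Rightarrow> complex mat" where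
  "cz_mat n E = Matrix.mat (2^n) (2^n) (\<lambda>(a,b).
      if a = b then (-1) ^ card {(i,j)\<in>E. bit a i \<and> bit a j} else 0)"

definition one_qubit_unitary :: "complex mat \<Rightarrow> bool" where
  "one_qubit_unitary U \<longleftrightarrow> U \<in> carrier_mat 2 2 \<and> U * dagger U = 1\<^sub>m 2"

definition pX :: "complex mat" where "pX = mat_of_rows_list 2 [[0,1],[1,0]]"
definition pY :: "complex mat" where "pY = mat_of_rows_list 2 [[0,-\<i>],[\<i>,0]]"
definition pZ :: "complex mat" where "pZ = mat_of_rows_list 2 [[1,0],[0,-1]]"

definition one_qubit_clifford :: "complex mat \<Rightarrow> bool" where
  "one_qubit_clifford U \<longleftrightarrow> one_qubit_unitary U \<and>
     (\<forall>P\<in>{pX,pY,pZ}. \<exists>Q\<in>{pX,pY,pZ}. \<exists>s\<in>{1,-1::complex}. U * P * dagger U = s \<cdot>\<^sub>m Q)"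

text \<open>A cycle of one-qubit gates u i (on qubit i < n), as a 2^n x 2^n matrix
  (tensor product).\<close>
definition cycle_mat :: "nat \<Rightarrow> (nat \<Rightarrow> complex mat) \<Rightarrow> complex mat" where
  "cycle_mat n u = Matrix.mat (2^n) (2^n) (\<lambda>(a,b). \<Prod>i<n. u i $$ (bitval a i, bitval b i))"

text \<open>Operator of the circuit with error pattern Ps (Ps j = Pauli after cycle j,
  Ps 0 = error on the input), up to cycle j:
  P_j cZ_j U_j ... P_1 cZ_1 U_1 P_0.  u j = one-qubit cycle j (j = 1..m).\<close>
primrec circ_op :: "nat \<Rightarrow> (nat \<Rightarrow> (nat \<times> nat) set) \<Rightarrow> (nat \<Rightarrow> nat \<Rightarrow> complex mat)
    \<Rightarrow> (nat \<Rightarrow> nat \<times> nat) \<Rightarrow> nat \<Rightarrow> complex mat" where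
  "circ_op n E u Ps 0 = pauli n (Ps 0)"
| "circ_op n E u Ps (Suc j) =
     pauli n (Ps (Suc j)) * cz_mat n (E (Suc j)) * cycle_mat n (u (Suc j)) * circ_op n E u Ps j"

definition no_err :: "nat \<Rightarrow> nat \<times> nat" where "no_err = (\<lambda>_. (0,0))"

definition ideal_op :: "nat \<Rightarrow> (nat \<Rightarrow> (nat \<times> nat) set) \<Rightarrow> (nat \<Rightarrow> nat \<Rightarrow> complex mat)
    \<Rightarrow> nat \<Rightarrow> complex mat" where
  "ideal_op n E u m = circ_op n E u no_err m"

definition rho0 :: "nat \<Rightarrow> complex mat" where
  "rho0 n = Matrix.mat (2^n) (2^n) (\<lambda>(a,b). if a = 0 \<and> b = 0 then 1 else 0)"

definition patterns :: "nat \<Rightarrow> nat \<Rightarrow> (nat \<Rightarrow> nat \<times> nat) set" where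
  "patterns n m = PiE {0..m} (\<lambda>_. paulis n)"

definition pat_prob :: "(nat \<Rightarrow> (nat \<times> nat) \<Rightarrow> real) \<Rightarrow> nat \<Rightarrow> (nat \<Rightarrow> nat \<times> nat) \<Rightarrow> real" where
  "pat_prob q m Ps = (\<Prod>j\<le>m. q j (Ps j))"

definition nonid_pattern :: "nat \<Rightarrow> (nat \<Rightarrow> nat \<times> nat) \<Rightarrow> bool" where
  "nonid_pattern m Ps \<longleftrightarrow> (\<exists>j\<le>m. Ps j \<noteq> (0,0))"

definition p_err :: "nat \<Rightarrow> nat \<Rightarrow> (nat \<Rightarrow> (nat \<times> nat) \<Rightarrow> real) \<Rightarrow> real" where
  "p_err n m q = (\<Sum>Ps\<in>{Ps\<in>patterns n m. nonid_pattern m Ps}. pat_prob q m Ps)"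

definition noisy_out :: "nat \<Rightarrow> nat \<Rightarrow> (nat \<Rightarrow> (nat \<times> nat) \<Rightarrow> real) \<Rightarrow> (nat \<Rightarrow> (nat \<times> nat) set)
    \<Rightarrow> (nat \<Rightarrow> nat \<Rightarrow> complex mat) \<Rightarrow> complex mat" where
  "noisy_out n m q E u = Matrix.mat (2^n) (2^n) (\<lambda>(a,b).
     \<Sum>Ps\<in>patterns n m. complex_of_real (pat_prob q m Ps) *
        (circ_op n E u Ps m * rho0 n * dagger (circ_op n E u Ps m)) $$ (a,b))"

definition ideal_out :: "nat \<Rightarrow> nat \<Rightarrow> (nat \<Rightarrow> (nat \<times> nat) set)
    \<Rightarrow> (nat \<Rightarrow> nat \<Rightarrow> complex mat) \<Rightarrow> complex mat" where
  "ideal_out n m E u = ideal_op n E u m * rho0 n * dagger (ideal_op n E u m)"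

definition outprob :: "complex mat \<Rightarrow> nat \<Rightarrow> real" where
  "outprob rho s = Re (rho $$ (s,s))"

definition inc_prob :: "nat \<Rightarrow> nat \<Rightarrow> (nat \<Rightarrow> (nat \<times> nat) set) \<Rightarrow> (nat \<Rightarrow> nat \<Rightarrow> complex mat)
    \<Rightarrow> (nat \<Rightarrow> nat \<times> nat) \<Rightarrow> real" where
  "inc_prob n m E u Ps = (\<Sum>s\<in>{1..<2^n}.
      outprob (circ_op n E u Ps m * rho0 n * dagger (circ_op n E u Ps m)) s)"

text \<open>Merged net error: the Pauli e such that the noisy circuit operator equals
  (up to a global phase) the Pauli e applied after the ideal circuit operator,
  i.e. all errors commuted to the final cycle (well defined for Clifford circuits).\<close>
definition net_error :: "nat \<Rightarrow> nat \<Rightarrow> (nat \<Rightarrow> (nat \<times> nat) set) \<Rightarrow> (nat \<Rightarrow> nat \<Rightarrow> complex mat)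
    \<Rightarrow> (nat \<Rightarrow> nat \<times> nat) \<Rightarrow> nat \<times> nat" where
  "net_error n m E u Ps = (SOME e. e \<in> paulis n \<and>
      (\<exists>c. cmod c = 1 \<and> circ_op n E u Ps m = c \<cdot>\<^sub>m (pauli n e * ideal_op n E u m)))"

definition p_inc :: "nat \<Rightarrow> nat \<Rightarrow> (nat \<Rightarrow> (nat \<times> nat) \<Rightarrow> real) \<Rightarrow> (nat \<Rightarrow> (nat \<times> nat) set)
    \<Rightarrow> (nat \<Rightarrow> nat \<Rightarrow> complex mat) pmf \<Rightarrow> real" where
  "p_inc n m q E mu = measure_pmf.expectation mu (\<lambda>u.
      \<Sum>Ps\<in>patterns n m. pat_prob q m Ps * inc_prob n m E u Ps)"

definition p_canc :: "nat \<Rightarrow> nat \<Rightarrow> (nat \<Rightarrow> (nat \<times> nat) \<Rightarrow> real) \<Rightarrow> (nat \<Rightarrow> (nat \<times> nat) set)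
    \<Rightarrow> (nat \<Rightarrow> nat \<Rightarrow> complex mat) pmf \<Rightarrow> real" where
  "p_canc n m q E mu = measure_pmf.expectation mu (\<lambda>u.
      \<Sum>Ps\<in>{Ps\<in>patterns n m. nonid_pattern m Ps \<and> net_error n m E u Ps = (0,0)}.
         pat_prob q m Ps) / p_err n m q"

end

theory Submission
  imports Defs "Jordan_Normal_Form.Determinant"
begin

text \<open>All circuit operators are unitary: Pauli and controlled-Z cycles are signed permutation
  matrices and a cycle of one-qubit gates is a tensor product of unitaries. Hence every error pattern
  yields a genuine output distribution on bit strings. The noisy target distribution is a mixture
  of these, weighted by the pattern probabilities, in which the identity pattern contributes the
  ideal distribution; so the variation distance is at most the weight of non-identity patterns,
  i.e. p_err. For the traps, the identity pattern never produces an incorrect output, which gives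
  p_inc \<le> p_err; splitting the non-identity patterns according to whether their net error cancels,
  the detection hypothesis gives p_inc \<ge> p_err (1 - p_canc) / 2.\<close>

lemma dagger_carrier_mat [simp]: "dagger A \<in> carrier_mat (dim_col A) (dim_row A)"
  by (simp add: dagger_def)

lemma dim_dagger [simp]: "dim_row (dagger A) = dim_col A" "dim_col (dagger A) = dim_row A"
  by (simp_all add: dagger_def)

lemma index_dagger [simp]: "i < dim_col A \<Longrightarrow> j < dim_row A \<Longrightarrow> dagger A $$ (i,j) = cnj (A $$ (j,i))"
  by (simp add: dagger_def)

lemma dagger_mult:
  assumes "A \<in> carrier_mat k l" "B \<in> carrier_mat l r"
  shows "dagger (A * B) = dagger B * dagger A"
  by (rule eq_matI) (use assms in \<open>auto simp: scalar_prod_def mult.commute intro!: sum.cong\<close>)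

definition unitary_mat :: "nat \<Rightarrow> complex mat \<Rightarrow> bool" where
  "unitary_mat N A \<longleftrightarrow> A \<in> carrier_mat N N \<and> dagger A * A = 1\<^sub>m N"

lemma unitary_mat_mult:
  assumes "unitary_mat N A" "unitary_mat N B"
  shows "unitary_mat N (A * B)"
proof -
  have A: "A \<in> carrier_mat N N" and B: "B \<in> carrier_mat N N"
    and AA: "dagger A * A = 1\<^sub>m N" and BB: "dagger B * B = 1\<^sub>m N"
    using assms by (auto simp: unitary_mat_def)
  have dA: "dagger A \<in> carrier_mat N N" and dB: "dagger B \<in> carrier_mat N N"
    using A B by auto
  have "dagger (A * B) * (A * B) = dagger B * ((dagger A * A) * B)"
    using A B dA dB by (simp add: dagger_mult[OF A B] assoc_mult_mat[of _ N N _ N _ N])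
  also have "\<dots> = 1\<^sub>m N"
    using AA BB B by simp
  finally show ?thesis
    using A B by (auto simp: unitary_mat_def)
qed

lemma unitary_matI:
  assumes A: "A \<in> carrier_mat N N"
    and columns: "\<And>b c. b < N \<Longrightarrow> c < N \<Longrightarrow>
      (\<Sum>a<N. cnj (A $$ (a,b)) * A $$ (a,c)) = (if b = c then 1 else 0)"
  shows "unitary_mat N A"
proof -
  have "dagger A * A = 1\<^sub>m N"
  proof (rule eq_matI)
    fix b c assume "b < dim_row (1\<^sub>m N)" "c < dim_col (1\<^sub>m N)"
    then show "(dagger A * A) $$ (b,c) = 1\<^sub>m N $$ (b,c)"
      using A columns by (simp add: scalar_prod_def atLeast0LessThan)
  qed (use A in auto)
  with A show ?thesis
    by (simp add: unitary_mat_def)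
qed

lemma unitary_mat_signed_permutation:
  assumes A: "A \<in> carrier_mat N N"
    and entries: "\<And>a b. a < N \<Longrightarrow> b < N \<Longrightarrow> A $$ (a,b) = (if a = \<pi> b then sg b else 0)"
    and maps_to: "\<And>b. b < N \<Longrightarrow> \<pi> b < N" and inj: "inj_on \<pi> {..<N}"
    and sign: "\<And>b. b < N \<Longrightarrow> cnj (sg b) * sg b = 1"
  shows "unitary_mat N A"
proof (rule unitary_matI[OF A])
  fix b c assume b: "b < N" and c: "c < N"
  have "(\<Sum>a<N. cnj (A $$ (a,b)) * A $$ (a,c))
      = (\<Sum>a<N. if a = \<pi> b then cnj (sg b) * (if \<pi> b = \<pi> c then sg c else 0) else 0)"
    by (rule sum.cong) (auto simp: entries b c)
  also have "\<dots> = (if b = c then 1 else 0)"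
    using maps_to[OF b] sign[OF b] inj_onD[OF inj, of b c] b c by auto
  finally show "(\<Sum>a<N. cnj (A $$ (a,b)) * A $$ (a,c)) = (if b = c then 1 else 0)" .
qed

lemma cnj_neg_one_power_mult_self: "cnj ((-1::complex) ^ k) * (-1) ^ k = 1"
  by (simp flip: power_mult_distrib)

lemma xor_less_power2: "(b::nat) < 2^n \<Longrightarrow> x < 2^n \<Longrightarrow> xor b x < 2^n"
  by (metis take_bit_nat_eq_self_iff take_bit_nat_less_exp take_bit_xor)

lemma unitary_pauli:
  assumes "e \<in> paulis n"
  shows "unitary_mat (2^n) (pauli n e)"
proof (rule unitary_mat_signed_permutation)
  show "inj_on (\<lambda>b. xor b (fst e)) {..<2^n}"
    by (rule inj_onI) (metis xor.assoc xor_self_eq xor.right_neutral)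
qed (use assms in \<open>auto simp: pauli_def paulis_def xor_less_power2 cnj_neg_one_power_mult_self\<close>)

lemma unitary_cz_mat: "unitary_mat (2^n) (cz_mat n E)"
  by (rule unitary_mat_signed_permutation[where \<pi> = id])
    (auto simp: cz_mat_def cnj_neg_one_power_mult_self)

lemma sum_lessThan_double: "(\<Sum>a<2 * (N::nat). g a) = (\<Sum>a<N. g (2 * a) + g (2 * a + 1))"
  by (induction N) (simp_all add: algebra_simps)

lemma bitval_double:
  "bitval (2 * a) 0 = 0" "bitval (Suc (2 * a)) 0 = 1"
  "bitval (2 * a) (Suc i) = bitval a i" "bitval (Suc (2 * a)) (Suc i) = bitval a i"
  by (auto simp: bitval_def bit_Suc bit_0)

lemma sum_prod_bitval:
  fixes f :: "nat \<Rightarrow> nat \<Rightarrow> 'a::comm_semiring_1"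
  shows "(\<Sum>a<2^n. \<Prod>i<n. f i (bitval a i)) = (\<Prod>i<n. f i 0 + f i 1)"
proof (induction n arbitrary: f)
  case (Suc n)
  have "(\<Sum>a<2^Suc n. \<Prod>i<Suc n. f i (bitval a i))
      = (\<Sum>a<2^n. f 0 0 * (\<Prod>i<n. f (Suc i) (bitval a i))
          + f 0 1 * (\<Prod>i<n. f (Suc i) (bitval a i)))"
    by (simp add: sum_lessThan_double prod.lessThan_Suc_shift bitval_double del: prod.lessThan_Suc)
  also have "\<dots> = (f 0 0 + f 0 1) * (\<Sum>a<2^n. \<Prod>i<n. f (Suc i) (bitval a i))"
    by (simp add: algebra_simps sum.distrib sum_distrib_left)
  also have "\<dots> = (\<Prod>i<Suc n. f i 0 + f i 1)"
    by (simp add: Suc[of "\<lambda>i. f (Suc i)"] prod.lessThan_Suc_shift del: prod.lessThan_Suc)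
  finally show ?case .
qed simp

lemma bitval_eq_imp_eq:
  assumes "b < 2^n" "c < 2^n" "\<And>i. i < n \<Longrightarrow> bitval b i = bitval c i"
  shows "b = c"
proof (rule bit_eqI)
  fix i show "bit b i = bit c i"
  proof (cases "i < n")
    case True
    then show ?thesis using assms(3)[of i] by (auto simp: bitval_def split: if_splits)
  next
    case False
    then have "\<not> bit b i" "\<not> bit c i"
      using assms(1,2) by (metis bit_take_bit_iff take_bit_nat_eq_self_iff)+
    then show ?thesis by simp
  qed
qed

lemma one_qubit_unitary_columns:
  assumes "one_qubit_unitary U" "p < 2" "r < 2"
  shows "cnj (U $$ (0,p)) * U $$ (0,r) + cnj (U $$ (1,p)) * U $$ (1,r) = (if p = r then 1 else 0)"
proof -
  have U: "U \<in> carrier_mat 2 2" and UU: "U * dagger U = 1\<^sub>m 2"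
    using assms by (auto simp: one_qubit_unitary_def)
  have "dagger U \<in> carrier_mat 2 2"
    using U by auto
  then have "dagger U * U = 1\<^sub>m 2"
    using mat_mult_left_right_inverse[OF U _ UU] by blast
  moreover have "(dagger U * U) $$ (p,r) = cnj (U $$ (0,p)) * U $$ (0,r) + cnj (U $$ (1,p)) * U $$ (1,r)"
    using U assms by (simp add: scalar_prod_def numeral_2_eq_2)
  ultimately show ?thesis
    using assms by simp
qed

lemma unitary_cycle_mat:
  assumes u: "\<And>i. i < n \<Longrightarrow> one_qubit_unitary (u i)"
  shows "unitary_mat (2^n) (cycle_mat n u)"
proof (rule unitary_matI)
  fix b c :: nat assume b: "b < 2^n" and c: "c < 2^n"
  define f where "f i t = cnj (u i $$ (t, bitval b i)) * u i $$ (t, bitval c i)" for i t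
  have "(\<Sum>a<2^n. cnj (cycle_mat n u $$ (a,b)) * cycle_mat n u $$ (a,c))
      = (\<Sum>a<2^n. \<Prod>i<n. f i (bitval a i))"
    by (rule sum.cong) (use b c in \<open>auto simp: cycle_mat_def f_def prod.distrib\<close>)
  also have "\<dots> = (\<Prod>i<n. f i 0 + f i 1)"
    by (rule sum_prod_bitval)
  also have "\<dots> = (\<Prod>i<n. if bitval b i = bitval c i then 1 else 0)"
    using one_qubit_unitary_columns[OF u] by (intro prod.cong) (auto simp: f_def bitval_def)
  also have "\<dots> = (if b = c then 1 else 0)"
    using bitval_eq_imp_eq[OF b c] by (auto simp: prod_zero_iff)
  finally show "(\<Sum>a<2^n. cnj (cycle_mat n u $$ (a,b)) * cycle_mat n u $$ (a,c))
      = (if b = c then 1 else 0)" .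
qed (simp add: cycle_mat_def)

lemma unitary_circ_op:
  assumes "\<And>j i. j \<in> {1..m} \<Longrightarrow> i < n \<Longrightarrow> one_qubit_unitary (u j i)"
    and "\<And>j. j \<le> m \<Longrightarrow> Ps j \<in> paulis n"
  shows "unitary_mat (2^n) (circ_op n E u Ps m)"
  using assms
  by (induction m) (auto intro!: unitary_mat_mult unitary_pauli unitary_cz_mat unitary_cycle_mat)

lemma output_state_diagonal:
  assumes C: "C \<in> carrier_mat (2^n) (2^n)" and s: "s < 2^n"
  shows "(C * rho0 n * dagger C) $$ (s,s) = C $$ (s,0) * cnj (C $$ (s,0))"
proof -
  have Crho: "(C * rho0 n) $$ (s,k) = (if k = 0 then C $$ (s,0) else 0)" if "k < 2^n" for k
  proof -
    have "(C * rho0 n) $$ (s,k) = (\<Sum>j<2^n. C $$ (s,j) * rho0 n $$ (j,k))"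
      using C s that by (simp add: scalar_prod_def atLeast0LessThan rho0_def)
    also have "\<dots> = (\<Sum>j<(2::nat)^n. if j = 0 then (if k = 0 then C $$ (s,0) else 0) else 0)"
      by (rule sum.cong) (use that in \<open>auto simp: rho0_def\<close>)
    finally show ?thesis by simp
  qed
  have "(C * rho0 n * dagger C) $$ (s,s) = (\<Sum>k<2^n. (C * rho0 n) $$ (s,k) * dagger C $$ (k,s))"
    using C s by (simp add: scalar_prod_def atLeast0LessThan rho0_def)
  also have "\<dots> = (\<Sum>k<(2::nat)^n. if k = 0 then C $$ (s,0) * cnj (C $$ (s,0)) else 0)"
    by (rule sum.cong) (use C s Crho in auto)
  finally show ?thesis by simp
qed

lemma outprob_output_state:
  assumes "unitary_mat (2^n) C" "s < 2^n"
  shows "outprob (C * rho0 n * dagger C) s = (cmod (C $$ (s,0)))\<^sup>2"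
proof -
  have "(C * rho0 n * dagger C) $$ (s,s) = C $$ (s,0) * cnj (C $$ (s,0))"
    using output_state_diagonal assms by (auto simp: unitary_mat_def)
  also have "\<dots> = complex_of_real ((cmod (C $$ (s,0)))\<^sup>2)"
    by (rule complex_norm_square[symmetric])
  finally show ?thesis
    by (simp add: outprob_def)
qed

lemma outprob_output_state_nonneg:
  "unitary_mat (2^n) C \<Longrightarrow> s < 2^n \<Longrightarrow> 0 \<le> outprob (C * rho0 n * dagger C) s"
  by (simp add: outprob_output_state)

lemma sum_outprob_output_state:
  assumes "unitary_mat (2^n) C"
  shows "(\<Sum>s<2^n. outprob (C * rho0 n * dagger C) s) = 1"
proof -
  have C: "C \<in> carrier_mat (2^n) (2^n)" and CC: "dagger C * C = 1\<^sub>m (2^n)"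
    using assms by (auto simp: unitary_mat_def)
  have "complex_of_real (\<Sum>s<2^n. (cmod (C $$ (s,0)))\<^sup>2) = (\<Sum>s<2^n. cnj (C $$ (s,0)) * C $$ (s,0))"
    unfolding of_real_sum by (intro sum.cong refl) (metis complex_norm_square mult.commute)
  also have "\<dots> = (dagger C * C) $$ (0,0)"
    using C by (simp add: scalar_prod_def atLeast0LessThan)
  also have "\<dots> = 1"
    using CC by simp
  finally have "(\<Sum>s<2^n. (cmod (C $$ (s,0)))\<^sup>2) = 1"
    by (simp only: of_real_eq_1_iff)
  then show ?thesis
    using assms by (simp add: outprob_output_state)
qed

lemma inc_prob_eq:
  assumes "unitary_mat (2^n) (circ_op n E u Ps m)"
  shows "inc_prob n m E u Ps
    = 1 - outprob (circ_op n E u Ps m * rho0 n * dagger (circ_op n E u Ps m)) 0"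
  using sum_outprob_output_state[OF assms]
  by (simp add: inc_prob_def atLeast0LessThan[symmetric] sum.atLeast_Suc_lessThan)

lemma inc_prob_nonneg:
  "unitary_mat (2^n) (circ_op n E u Ps m) \<Longrightarrow> 0 \<le> inc_prob n m E u Ps"
  unfolding inc_prob_def by (auto intro!: sum_nonneg outprob_output_state_nonneg)

lemma inc_prob_le_1:
  "unitary_mat (2^n) (circ_op n E u Ps m) \<Longrightarrow> inc_prob n m E u Ps \<le> 1"
  using inc_prob_eq outprob_output_state_nonneg[of n _ 0] by fastforce

lemma finite_patterns: "finite (patterns n m)"
  by (simp add: patterns_def paulis_def finite_PiE)

lemma patterns_in_paulis: "Ps \<in> patterns n m \<Longrightarrow> j \<le> m \<Longrightarrow> Ps j \<in> paulis n"
  by (auto simp: patterns_def)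

lemma circ_op_identity_pattern:
  "\<not> nonid_pattern m Ps \<Longrightarrow> circ_op n E u Ps m = ideal_op n E u m"
proof -
  have "(\<And>j. j \<le> k \<Longrightarrow> Ps j = no_err j) \<Longrightarrow> circ_op n E u Ps k = circ_op n E u no_err k" for k
    by (induction k) auto
  then show "\<not> nonid_pattern m Ps \<Longrightarrow> circ_op n E u Ps m = ideal_op n E u m"
    by (auto simp: nonid_pattern_def ideal_op_def no_err_def)
qed

lemma sum_abs_diff_mixture_le:
  fixes w :: "'a \<Rightarrow> real" and d :: "'a \<Rightarrow> 'b \<Rightarrow> real"
  assumes "finite X" "finite S"
    and w_nonneg: "\<And>x. x \<in> X \<Longrightarrow> 0 \<le> w x" and w_sum: "(\<Sum>x\<in>X. w x) = 1"
    and d_nonneg: "\<And>x s. x \<in> X \<Longrightarrow> s \<in> S \<Longrightarrow> 0 \<le> d x s"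
    and d_sum: "\<And>x. x \<in> X \<Longrightarrow> (\<Sum>s\<in>S. d x s) = 1"
    and d0_nonneg: "\<And>s. s \<in> S \<Longrightarrow> 0 \<le> d0 s" and d0_sum: "(\<Sum>s\<in>S. d0 s) = 1"
    and agree: "\<And>x s. x \<in> X \<Longrightarrow> \<not> P x \<Longrightarrow> s \<in> S \<Longrightarrow> d x s = d0 s"
  shows "(\<Sum>s\<in>S. \<bar>d0 s - (\<Sum>x\<in>X. w x * d x s)\<bar>) \<le> 2 * (\<Sum>x\<in>{x\<in>X. P x}. w x)"
proof -
  have dist_le: "(\<Sum>s\<in>S. \<bar>d0 s - d x s\<bar>) \<le> (if P x then 2 else 0)" if x: "x \<in> X" for x
  proof (cases "P x")
    case True
    have "(\<Sum>s\<in>S. \<bar>d0 s - d x s\<bar>) \<le> (\<Sum>s\<in>S. d0 s + d x s)"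
      using d0_nonneg d_nonneg[OF x] by (intro sum_mono) (simp add: abs_le_iff)
    then show ?thesis
      using True d0_sum d_sum[OF x] by (simp add: sum.distrib)
  qed (use agree[OF x] in simp)
  have "(\<Sum>s\<in>S. \<bar>d0 s - (\<Sum>x\<in>X. w x * d x s)\<bar>) = (\<Sum>s\<in>S. \<bar>\<Sum>x\<in>X. w x * (d0 s - d x s)\<bar>)"
    by (simp add: right_diff_distrib sum_subtractf w_sum flip: sum_distrib_right)
  also have "\<dots> \<le> (\<Sum>s\<in>S. \<Sum>x\<in>X. w x * \<bar>d0 s - d x s\<bar>)"
    by (intro sum_mono order.trans[OF sum_abs]) (simp add: abs_mult w_nonneg)
  also have "\<dots> = (\<Sum>x\<in>X. w x * (\<Sum>s\<in>S. \<bar>d0 s - d x s\<bar>))"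
    by (subst sum.swap) (simp add: sum_distrib_left)
  also have "\<dots> \<le> (\<Sum>x\<in>X. w x * (if P x then 2 else 0))"
    by (intro sum_mono mult_left_mono dist_le w_nonneg)
  also have "\<dots> = 2 * (\<Sum>x\<in>{x\<in>X. P x}. w x)"
    using \<open>finite X\<close> by (simp add: sum.inter_filter sum_distrib_left mult.commute if_distrib cong: if_cong)
  finally show ?thesis .
qed

locale pauli_noise =
  fixes n m :: nat and q :: "nat \<Rightarrow> nat \<times> nat \<Rightarrow> real"
  assumes q_nonneg: "\<And>j e. j \<le> m \<Longrightarrow> e \<in> paulis n \<Longrightarrow> 0 \<le> q j e"
    and q_sum: "\<And>j. j \<le> m \<Longrightarrow> (\<Sum>e\<in>paulis n. q j e) = 1"
begin

lemma pat_prob_nonneg: "Ps \<in> patterns n m \<Longrightarrow> 0 \<le> pat_prob q m Ps"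
  unfolding pat_prob_def by (auto intro!: prod_nonneg q_nonneg patterns_in_paulis)

lemma sum_pat_prob: "(\<Sum>Ps\<in>patterns n m. pat_prob q m Ps) = 1"
proof -
  have "(\<Sum>Ps\<in>patterns n m. pat_prob q m Ps) = (\<Prod>j\<in>{0..m}. \<Sum>e\<in>paulis n. q j e)"
    unfolding patterns_def pat_prob_def atLeast0AtMost
    by (rule prod_sum_PiE[symmetric]) (auto simp: paulis_def)
  also have "\<dots> = 1"
    by (simp add: q_sum)
  finally show ?thesis .
qed

lemma p_err_eq_sum_if:
  "p_err n m q = (\<Sum>Ps\<in>patterns n m. if nonid_pattern m Ps then pat_prob q m Ps else 0)"
  by (simp add: p_err_def sum.inter_filter finite_patterns)

lemma weighted_pattern_sum_bounds:
  assumes "S \<subseteq> patterns n m" and "\<And>Ps. Ps \<in> S \<Longrightarrow> 0 \<le> w Ps \<and> w Ps \<le> 1"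
  shows "\<bar>\<Sum>Ps\<in>S. pat_prob q m Ps * w Ps\<bar> \<le> 1"
proof -
  have "0 \<le> (\<Sum>Ps\<in>S. pat_prob q m Ps * w Ps)"
    by (intro sum_nonneg mult_nonneg_nonneg) (use assms in \<open>auto intro: pat_prob_nonneg\<close>)
  moreover have "(\<Sum>Ps\<in>S. pat_prob q m Ps * w Ps) \<le> (\<Sum>Ps\<in>S. pat_prob q m Ps)"
    using assms by (auto intro!: sum_mono mult_left_le pat_prob_nonneg)
  moreover have "(\<Sum>Ps\<in>S. pat_prob q m Ps) \<le> (\<Sum>Ps\<in>patterns n m. pat_prob q m Ps)"
    using assms(1) by (intro sum_mono2 finite_patterns) (auto intro: pat_prob_nonneg)
  ultimately show ?thesis
    by (simp add: sum_pat_prob)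
qed

lemma integrable_weighted_pattern_sum:
  assumes "\<And>u. S u \<subseteq> patterns n m"
    and "\<And>u Ps. u \<in> set_pmf mu \<Longrightarrow> Ps \<in> S u \<Longrightarrow> 0 \<le> w u Ps \<and> w u Ps \<le> 1"
  shows "integrable (measure_pmf mu) (\<lambda>u. \<Sum>Ps\<in>S u. pat_prob q m Ps * w u Ps)"
  by (rule measure_pmf.integrable_const_bound[where B = 1])
    (use assms in \<open>auto simp: AE_measure_pmf_iff intro!: weighted_pattern_sum_bounds\<close>)

lemma integrable_pattern_sum:
  assumes "\<And>u. S u \<subseteq> patterns n m"
  shows "integrable (measure_pmf mu) (\<lambda>u. \<Sum>Ps\<in>S u. pat_prob q m Ps)"
  using integrable_weighted_pattern_sum[of S mu "\<lambda>_ _. 1"] assms by simp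

lemma variation_distance_le_p_err:
  assumes "\<And>j i. j \<in> {1..m} \<Longrightarrow> i < n \<Longrightarrow> one_qubit_unitary (U j i)"
  shows "(1/2) * (\<Sum>s<2^n. \<bar>outprob (ideal_out n m E U) s - outprob (noisy_out n m q E U) s\<bar>)
    \<le> p_err n m q"
proof -
  let ?d = "\<lambda>Ps s. outprob (circ_op n E U Ps m * rho0 n * dagger (circ_op n E U Ps m)) s"
  have unitary: "unitary_mat (2^n) (circ_op n E U Ps m)" if "\<And>j. j \<le> m \<Longrightarrow> Ps j \<in> paulis n" for Ps
    using assms that by (rule unitary_circ_op)
  have unitary_pattern: "unitary_mat (2^n) (circ_op n E U Ps m)" if "Ps \<in> patterns n m" for Ps
    using that by (intro unitary) (rule patterns_in_paulis)
  have unitary_ideal: "unitary_mat (2^n) (circ_op n E U no_err m)"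
    by (rule unitary) (simp add: no_err_def paulis_def)
  have "outprob (noisy_out n m q E U) s = (\<Sum>Ps\<in>patterns n m. pat_prob q m Ps * ?d Ps s)"
    if "s < 2^n" for s
    using that by (simp add: noisy_out_def outprob_def Re_sum)
  moreover have "outprob (ideal_out n m E U) s = ?d no_err s" for s
    by (simp add: ideal_out_def ideal_op_def)
  ultimately have "(\<Sum>s<2^n. \<bar>outprob (ideal_out n m E U) s - outprob (noisy_out n m q E U) s\<bar>)
      = (\<Sum>s<2^n. \<bar>?d no_err s - (\<Sum>Ps\<in>patterns n m. pat_prob q m Ps * ?d Ps s)\<bar>)"
    by simp
  also have "\<dots> \<le> 2 * (\<Sum>Ps\<in>{Ps\<in>patterns n m. nonid_pattern m Ps}. pat_prob q m Ps)"
  proof (rule sum_abs_diff_mixture_le)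
    show "?d Ps s = ?d no_err s" if "\<not> nonid_pattern m Ps" for Ps s
      using circ_op_identity_pattern[OF that] by (simp add: ideal_op_def)
  qed (use finite_patterns pat_prob_nonneg sum_pat_prob unitary_pattern unitary_ideal in
      \<open>auto intro: outprob_output_state_nonneg sum_outprob_output_state\<close>)
  finally show ?thesis
    by (simp add: p_err_def)
qed

lemma net_error_mass_ge:
  "p_err n m q * (1 - p_canc n m q E mu)
    \<le> measure_pmf.expectation mu
        (\<lambda>u. \<Sum>Ps\<in>{Ps\<in>patterns n m. net_error n m E u Ps \<noteq> (0,0)}. pat_prob q m Ps)"
  (is "_ \<le> measure_pmf.expectation mu ?detectable")
proof -
  define cancelled where "cancelled u = (\<Sum>Ps\<in>{Ps\<in>patterns n m. nonid_pattern m Ps \<and>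
      net_error n m E u Ps = (0,0)}. pat_prob q m Ps)" for u
  have int_detectable: "integrable (measure_pmf mu) ?detectable"
    and int_cancelled: "integrable (measure_pmf mu) cancelled"
    unfolding cancelled_def by (auto intro: integrable_pattern_sum)
  have pointwise: "p_err n m q \<le> ?detectable u + cancelled u" for u
    using finite_patterns pat_prob_nonneg
    by (auto simp: p_err_eq_sum_if cancelled_def sum.inter_filter simp flip: sum.distrib
        intro!: sum_mono)
  have "p_err n m q = measure_pmf.expectation mu (\<lambda>_. p_err n m q)"
    by simp
  also have "\<dots> \<le> measure_pmf.expectation mu (\<lambda>u. ?detectable u + cancelled u)"
    using int_detectable int_cancelled pointwise by (intro integral_mono) auto
  also have "\<dots> = measure_pmf.expectation mu ?detectable + measure_pmf.expectation mu cancelled"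
    using int_detectable int_cancelled by simp
  finally have split: "p_err n m q - measure_pmf.expectation mu cancelled
      \<le> measure_pmf.expectation mu ?detectable"
    by simp
  have "0 \<le> measure_pmf.expectation mu ?detectable"
    by (intro integral_nonneg_AE) (auto intro!: sum_nonneg pat_prob_nonneg)
  moreover have "p_canc n m q E mu = measure_pmf.expectation mu cancelled / p_err n m q"
    by (simp add: p_canc_def cancelled_def[abs_def])
  ultimately show ?thesis
    using split by (cases "p_err n m q = 0") (simp_all add: field_simps)
qed

end

locale trap_circuits = pauli_noise +
  fixes E :: "nat \<Rightarrow> (nat \<times> nat) set" and mu :: "(nat \<Rightarrow> nat \<Rightarrow> complex mat) pmf"
  assumes trap_unitary: "\<And>u j i. u \<in> set_pmf mu \<Longrightarrow> j \<in> {1..m} \<Longrightarrow> i < n \<Longrightarrow> one_qubit_unitary (u j i)"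
    and trap_ideal: "\<And>u. u \<in> set_pmf mu \<Longrightarrow> outprob (ideal_out n m E u) 0 = 1"
begin

lemma unitary_trap_circ_op:
  "u \<in> set_pmf mu \<Longrightarrow> Ps \<in> patterns n m \<Longrightarrow> unitary_mat (2^n) (circ_op n E u Ps m)"
  by (intro unitary_circ_op trap_unitary) (auto intro: patterns_in_paulis)

lemma trap_inc_prob_bounds:
  "u \<in> set_pmf mu \<Longrightarrow> Ps \<in> patterns n m \<Longrightarrow> 0 \<le> inc_prob n m E u Ps \<and> inc_prob n m E u Ps \<le> 1"
  using inc_prob_nonneg inc_prob_le_1 unitary_trap_circ_op by blast

lemma trap_inc_prob_identity_pattern:
  assumes "u \<in> set_pmf mu" "Ps \<in> patterns n m" "\<not> nonid_pattern m Ps"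
  shows "inc_prob n m E u Ps = 0"
  using inc_prob_eq[OF unitary_trap_circ_op[OF assms(1,2)]] trap_ideal[OF assms(1)]
    circ_op_identity_pattern[OF assms(3)]
  by (simp add: ideal_out_def)

lemma integrable_trap_inc:
  assumes "\<And>u. S u \<subseteq> patterns n m"
  shows "integrable (measure_pmf mu) (\<lambda>u. \<Sum>Ps\<in>S u. pat_prob q m Ps * inc_prob n m E u Ps)"
  using assms trap_inc_prob_bounds by (intro integrable_weighted_pattern_sum) blast+

lemma p_inc_le_p_err: "p_inc n m q E mu \<le> p_err n m q"
proof -
  have "(\<Sum>Ps\<in>patterns n m. pat_prob q m Ps * inc_prob n m E u Ps) \<le> p_err n m q"
    if u: "u \<in> set_pmf mu" for u
    unfolding p_err_eq_sum_if
  proof (rule sum_mono)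
    fix Ps assume Ps: "Ps \<in> patterns n m"
    show "pat_prob q m Ps * inc_prob n m E u Ps \<le> (if nonid_pattern m Ps then pat_prob q m Ps else 0)"
      using trap_inc_prob_bounds[OF u Ps] trap_inc_prob_identity_pattern[OF u Ps]
        pat_prob_nonneg[OF Ps] by (auto intro: mult_left_le)
  qed
  then have "p_inc n m q E mu \<le> measure_pmf.expectation mu (\<lambda>_. p_err n m q)"
    unfolding p_inc_def
    by (intro integral_mono_AE integrable_trap_inc) (auto simp: AE_measure_pmf_iff)
  then show ?thesis
    by simp
qed

lemma net_error_inc_le_p_inc:
  "measure_pmf.expectation mu (\<lambda>u. \<Sum>Ps\<in>{Ps\<in>patterns n m. net_error n m E u Ps \<noteq> (0,0)}.
      pat_prob q m Ps * inc_prob n m E u Ps) \<le> p_inc n m q E mu"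
  unfolding p_inc_def
  using finite_patterns trap_inc_prob_bounds pat_prob_nonneg
  by (intro integral_mono_AE integrable_trap_inc)
    (auto simp: AE_measure_pmf_iff intro!: sum_mono2 mult_nonneg_nonneg)

end

theorem mainTheorem3:
  fixes n m :: nat
    and q :: "nat \<Rightarrow> (nat \<times> nat) \<Rightarrow> real"
    and E :: "nat \<Rightarrow> (nat \<times> nat) set"
    and Ut :: "nat \<Rightarrow> nat \<Rightarrow> complex mat"
    and mu :: "(nat \<Rightarrow> nat \<Rightarrow> complex mat) pmf"
  assumes q_nonneg: "\<And>j e. j \<le> m \<Longrightarrow> e \<in> paulis n \<Longrightarrow> q j e \<ge> 0"
    and q_sum: "\<And>j. j \<le> m \<Longrightarrow> (\<Sum>e\<in>paulis n. q j e) = 1"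
    and cz: "\<And>j. j \<in> {1..m} \<Longrightarrow> cz_cycle n (E j)"
    and target_gates: "\<And>j i. j \<in> {1..m} \<Longrightarrow> i < n \<Longrightarrow> one_qubit_unitary (Ut j i)"
    and trap_clifford: "\<And>u j i. u \<in> set_pmf mu \<Longrightarrow> j \<in> {1..m} \<Longrightarrow> i < n \<Longrightarrow>
                          one_qubit_clifford (u j i)"
    and trap_ideal: "\<And>u. u \<in> set_pmf mu \<Longrightarrow> outprob (ideal_out n m E u) 0 = 1"
    and canc_lt1: "p_canc n m q E mu < 1"
    and detect: "measure_pmf.expectation mu (\<lambda>u.
          \<Sum>Ps\<in>{Ps\<in>patterns n m. net_error n m E u Ps \<noteq> (0,0)}.
             pat_prob q m Ps * inc_prob n m E u Ps)
        \<ge> (1/2) * measure_pmf.expectation mu (\<lambda>u.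
          \<Sum>Ps\<in>{Ps\<in>patterns n m. net_error n m E u Ps \<noteq> (0,0)}. pat_prob q m Ps)"
  shows "p_inc n m q E mu \<ge> p_err n m q * (1 - p_canc n m q E mu) / 2
    \<and> (1/2) * (\<Sum>s<2^n. \<bar>outprob (ideal_out n m E Ut) s - outprob (noisy_out n m q E Ut) s\<bar>)
        \<le> p_err n m q
    \<and> p_err n m q \<le> 2 * p_inc n m q E mu / (1 - p_canc n m q E mu)
    \<and> 2 * p_inc n m q E mu \<le> 2 * p_err n m q"
proof -
  \<comment> \<open>Only unitarity of the gates is used: cz_mat is unitary for any E, and of the Clifford
    property of the trap gates only the unitarity they include is needed.\<close>
  interpret trap_circuits n m q E mu
    using q_nonneg q_sum trap_clifford trap_ideal
    by unfold_locales (auto simp: one_qubit_clifford_def)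
  have lower: "p_err n m q * (1 - p_canc n m q E mu) / 2 \<le> p_inc n m q E mu"
    using net_error_mass_ge[of E mu] detect net_error_inc_le_p_inc by linarith
  moreover from lower canc_lt1
  have "p_err n m q \<le> 2 * p_inc n m q E mu / (1 - p_canc n m q E mu)"
    by (simp add: pos_le_divide_eq mult.commute)
  ultimately show ?thesis
    using variation_distance_le_p_err[OF target_gates] p_inc_le_p_err by simp
qed

end
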